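(* Let $G$ be a connected edge-stable equimatchable graph that has a cut vertex. Then $G$ is bipartite.
   Context: All graphs are finite and simple. A graph is equimatchable if all its maximal matchings have the same cardinality. An equimatchable graph $G$ is edge-stable if $G\setminus e$ (remove the edge $e$, keep all vertices) is equimatchable for every $e\in E(G)$. A cut vertex of a connected graph is a vertex whose removal disconnects the graph. *)

theory Defs
  imports Main
begin

definition graph :: "'a set \<Rightarrow> 'a set set \<Rightarrow> bool" where
  "graph V E \<longleftrightarrow> finite V \<and> (\<forall>e\<in>E. \<exists>u v. e = {u, v} \<and> u \<noteq> v \<and> u \<in> V \<and> v \<in> V)"

definition matching :: "'a set set \<Rightarrow> 'a set set \<Rightarrow> bool" where
  "matching E M \<longleftrightarrow> M \<subseteq> E \<and> (\<forall>e1\<in>M. \<forall>e2\<in>M. e1 \<noteq> e2 \<longrightarrow> e1 \<inter> e2 = {})"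

definition maximal_matching :: "'a set set \<Rightarrow> 'a set set \<Rightarrow> bool" where
  "maximal_matching E M \<longleftrightarrow> matching E M \<and> (\<forall>M'. matching E M' \<longrightarrow> M \<subseteq> M' \<longrightarrow> M' = M)"

definition equimatchable :: "'a set set \<Rightarrow> bool" where
  "equimatchable E \<longleftrightarrow>
     (\<forall>M1 M2. maximal_matching E M1 \<longrightarrow> maximal_matching E M2 \<longrightarrow> card M1 = card M2)"

(* G \ e keeps all vertices; matchings do not depend on isolated vertices *)
definition edge_stable :: "'a set set \<Rightarrow> bool" where
  "edge_stable E \<longleftrightarrow> equimatchable E \<and> (\<forall>e\<in>E. equimatchable (E - {e}))"

definition connected_graph :: "'a set \<Rightarrow> 'a set set \<Rightarrow> bool" where
  "connected_graph V E \<longleftrightarrow> V \<noteq> {} \<and>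
     (\<forall>u\<in>V. \<forall>v\<in>V. (u, v) \<in> {(x, y). {x, y} \<in> E}\<^sup>*)"

definition del_vertex :: "'a \<Rightarrow> 'a set set \<Rightarrow> 'a set set" where
  "del_vertex v E = {e \<in> E. v \<notin> e}"

definition cut_vertex :: "'a set \<Rightarrow> 'a set set \<Rightarrow> 'a \<Rightarrow> bool" where
  "cut_vertex V E v \<longleftrightarrow> v \<in> V \<and>
     (\<exists>x\<in>V - {v}. \<exists>y\<in>V - {v}. (x, y) \<notin> {(a, b). {a, b} \<in> del_vertex v E}\<^sup>*)"

definition bipartite :: "'a set \<Rightarrow> 'a set set \<Rightarrow> bool" where
  "bipartite V E \<longleftrightarrow> (\<exists>A B. A \<inter> B = {} \<and> A \<union> B = V \<and>
     (\<forall>e\<in>E. \<exists>a\<in>A. \<exists>b\<in>B. e = {a, b}))"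

end

theory Submission
  imports Defs
begin

text \<open>Fix a maximal matching \<open>M\<close>. By edge stability, every matched edge \<open>uv\<close> that is not a
  component of its own has an end adjacent to an \<open>M\<close>-exposed vertex: otherwise \<open>M - uv\<close> would
  stay maximal in \<open>G - uv\<close>, while a maximal matching of \<open>G - uv\<close> through an edge at \<open>u\<close> or
  \<open>v\<close> is also maximal in \<open>G\<close>, so \<open>G - uv\<close> would not be equimatchable. Equimatchability
  makes every maximal matching maximum, so there are no augmenting paths and exchanges of equal
  size preserve maximality.

  If at least two vertices are exposed, there is no blossom: a vertex set around an exposed vertex
  each of whose vertices can be made the exposed one by such exchanges. Using the first fact, a
  blossom grows along any path until it contains a neighbour of a second exposed vertex \<open>r\<close>, and
  the maximal matching exposing that neighbour would leave its edge to \<open>r\<close> uncovered. Triangles and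
  pentagons through an exposed vertex are blossoms; excluding them and short augmenting paths,
  every edge joins a vertex adjacent to an exposed vertex to one that is not.

  If exactly one vertex \<open>f\<close> is exposed, we may assume the cut vertex \<open>c\<close> matched, to \<open>p\<close> say.
  Every vertex other than \<open>c\<close> and \<open>p\<close> reaches \<open>f\<close> in \<open>G - c\<close>, so \<open>p\<close> is isolated there; the
  same holds for \<open>f\<close> after exchanging \<open>cp\<close> for \<open>cf\<close>, hence \<open>G\<close> is the path \<open>p c f\<close>.\<close>

lemma graph_edgeE:
  assumes "graph V E" "e \<in> E"
  obtains u v where "e = {u, v}" "u \<noteq> v" "u \<in> V" "v \<in> V"
  using assms unfolding graph_def by blast

lemma graph_edge_distinct: "graph V E \<Longrightarrow> {u, v} \<in> E \<Longrightarrow> u \<noteq> v"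
  by (metis doubleton_eq_iff graph_edgeE)

lemma graph_edge_vertices: "graph V E \<Longrightarrow> {u, v} \<in> E \<Longrightarrow> u \<in> V \<and> v \<in> V"
  by (metis doubleton_eq_iff graph_edgeE)

lemma graph_edge_nonempty: "graph V E \<Longrightarrow> e \<in> E \<Longrightarrow> e \<noteq> {}"
  by (metis graph_edgeE insert_not_empty)

lemma graph_finite_edges:
  assumes "graph V E"
  shows "finite E"
proof -
  have "E \<subseteq> Pow V"
  proof
    fix e assume "e \<in> E"
    with assms show "e \<in> Pow V"
      by (elim graph_edgeE) auto
  qed
  moreover have "finite V"
    using assms unfolding graph_def by simp
  ultimately show ?thesis
    by (simp add: finite_subset)
qed

lemma graph_subset_edges: "graph V E \<Longrightarrow> E' \<subseteq> E \<Longrightarrow> graph V E'"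
  unfolding graph_def by (meson subsetD)

lemma graph_Union_subset:
  assumes "graph V E" "M \<subseteq> E"
  shows "\<Union>M \<subseteq> V"
proof
  fix x assume "x \<in> \<Union>M"
  then obtain e where "e \<in> E" "x \<in> e"
    using assms(2) by blast
  with assms(1) show "x \<in> V"
    by (elim graph_edgeE) auto
qed

lemma connected_graph_neighbour:
  assumes "connected_graph V E" "x \<in> V" "c \<in> V" "x \<noteq> c"
  obtains u where "{c, u} \<in> E"
proof -
  have "(c, x) \<in> {(a, b). {a, b} \<in> E}\<^sup>*"
    using assms unfolding connected_graph_def by blast
  then show ?thesis
    using assms(4) that by (auto elim: converse_rtranclE)
qed

subsection \<open>Matchings\<close>

lemma matching_subset_edges: "matching E M \<Longrightarrow> M \<subseteq> E"
  unfolding matching_def by simp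

lemma matching_edge_unique:
  "matching E M \<Longrightarrow> e \<in> M \<Longrightarrow> d \<in> M \<Longrightarrow> x \<in> e \<Longrightarrow> x \<in> d \<Longrightarrow> d = e"
  unfolding matching_def by blast

lemma matching_disjoint: "matching E M \<Longrightarrow> d \<in> M \<Longrightarrow> e \<in> M \<Longrightarrow> d \<noteq> e \<Longrightarrow> d \<inter> e = {}"
  unfolding matching_def by blast

lemma matching_subset: "matching E M \<Longrightarrow> N \<subseteq> M \<Longrightarrow> matching E N"
  unfolding matching_def by blast

lemma matching_finite: "finite E \<Longrightarrow> matching E M \<Longrightarrow> finite M"
  unfolding matching_def using finite_subset by blast

lemma matching_insert:
  "matching E M \<Longrightarrow> d \<in> E \<Longrightarrow> d \<inter> \<Union>M = {} \<Longrightarrow> matching E (insert d M)"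
  unfolding matching_def by blast

lemma matching_singleton: "e \<in> E \<Longrightarrow> matching E {e}"
  unfolding matching_def by blast

lemma matching_pair: "d \<in> E \<Longrightarrow> e \<in> E \<Longrightarrow> d \<inter> e = {} \<Longrightarrow> matching E {d, e}"
  unfolding matching_def by blast

lemma matching_Un:
  assumes "matching E A" "matching E B" "\<Union>A \<inter> \<Union>B = {}"
  shows "matching E (A \<union> B)"
  unfolding matching_def
proof (intro conjI ballI impI)
  show "A \<union> B \<subseteq> E"
    using assms(1,2) matching_subset_edges by blast
  fix d e assume "d \<in> A \<union> B" "e \<in> A \<union> B" "d \<noteq> e"
  with assms show "d \<inter> e = {}"
    using matching_disjoint[of E A d e] matching_disjoint[of E B d e] by blast
qed

lemma matching_Union_Diff:
  assumes "matching E M" "X \<subseteq> M"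
  shows "\<Union>(M - X) = \<Union>M - \<Union>X"
proof
  show "\<Union>(M - X) \<subseteq> \<Union>M - \<Union>X"
  proof
    fix x assume "x \<in> \<Union>(M - X)"
    then obtain e where e: "e \<in> M" "e \<notin> X" "x \<in> e"
      by blast
    have "x \<notin> \<Union>X"
    proof
      assume "x \<in> \<Union>X"
      then obtain d where "d \<in> X" "x \<in> d"
        by blast
      with e assms show False
        using matching_edge_unique[of E M e d x] by blast
    qed
    with e show "x \<in> \<Union>M - \<Union>X"
      by blast
  qed
qed blast

lemma matching_partner:
  assumes "graph V E" "matching E M" "u \<in> \<Union>M"
  obtains v where "{u, v} \<in> M" "v \<noteq> u"
proof -
  obtain e where e: "e \<in> M" "u \<in> e"
    using assms(3) by blast
  then have "e \<in> E"
    using assms(2) matching_subset_edges by blast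
  with assms(1) obtain a b where "e = {a, b}" "a \<noteq> b"
    by (elim graph_edgeE)
  with e that show ?thesis
    by (metis doubleton_eq_iff insertE singletonD)
qed

lemma matching_two_edges:
  assumes M: "matching E M" and u: "{u, u'} \<in> M" and v: "{v, v'} \<in> M"
    and uv: "u \<noteq> v" "{u, v} \<notin> M"
  shows "{u, u'} \<noteq> {v, v'}" "{u, u'} \<inter> {v, v'} = {}"
proof -
  show ne: "{u, u'} \<noteq> {v, v'}"
    using u uv by (auto simp: doubleton_eq_iff insert_commute)
  show "{u, u'} \<inter> {v, v'} = {}"
    using matching_disjoint[OF M u v ne] .
qed

lemma maximal_matchingD: "maximal_matching E M \<Longrightarrow> matching E M"
  unfolding maximal_matching_def by blast

lemma maximal_matching_iff:
  assumes "graph V E" "matching E M"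
  shows "maximal_matching E M \<longleftrightarrow> (\<forall>e\<in>E. e \<inter> \<Union>M \<noteq> {})"
proof
  assume max: "maximal_matching E M"
  show "\<forall>e\<in>E. e \<inter> \<Union>M \<noteq> {}"
  proof (intro ballI notI)
    fix e assume e: "e \<in> E" "e \<inter> \<Union>M = {}"
    have "e \<noteq> {}"
      using graph_edge_nonempty[OF assms(1) e(1)] .
    with e(2) have "e \<notin> M"
      by blast
    moreover have "matching E (insert e M)"
      using matching_insert[OF assms(2) e] .
    ultimately show False
      using max unfolding maximal_matching_def by blast
  qed
next
  assume meets: "\<forall>e\<in>E. e \<inter> \<Union>M \<noteq> {}"
  show "maximal_matching E M"
    unfolding maximal_matching_def
  proof (intro conjI allI impI)
    fix M' assume M': "matching E M'" "M \<subseteq> M'"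
    show "M' = M"
    proof (rule ccontr)
      assume "M' \<noteq> M"
      then obtain e where e: "e \<in> M'" "e \<notin> M"
        using M'(2) by blast
      then have "e \<inter> \<Union>M \<noteq> {}"
        using meets M'(1) matching_subset_edges by blast
      then obtain d where d: "d \<in> M" "d \<inter> e \<noteq> {}"
        by blast
      then have "d \<in> M'" "d \<noteq> e"
        using M'(2) e(2) by blast+
      then show False
        using matching_disjoint[OF M'(1) _ e(1)] d(2) by blast
    qed
  qed (rule assms(2))
qed

lemma maximal_matching_meets:
  "graph V E \<Longrightarrow> maximal_matching E M \<Longrightarrow> e \<in> E \<Longrightarrow> e \<inter> \<Union>M \<noteq> {}"
  using maximal_matching_iff maximal_matchingD by blast

lemma maximal_matching_no_exposed_edge:
  "graph V E \<Longrightarrow> maximal_matching E M \<Longrightarrow> {a, b} \<in> E \<Longrightarrow> a \<in> \<Union>M \<or> b \<in> \<Union>M"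
  using maximal_matching_meets by blast

lemma matching_extend_maximal:
  assumes "finite E" "matching E N"
  obtains M where "maximal_matching E M" "N \<subseteq> M"
proof -
  let ?P = "\<lambda>M. matching E M \<and> N \<subseteq> M"
  have "\<forall>M. ?P M \<longrightarrow> card M < Suc (card E)"
    using assms(1) unfolding matching_def by (auto simp: less_Suc_eq_le intro: card_mono)
  then obtain M where M: "?P M" "\<forall>M'. ?P M' \<longrightarrow> card M' \<le> card M"
    using ex_has_greatest_nat[of ?P N card "Suc (card E)"] assms(2) by blast
  have "maximal_matching E M"
    unfolding maximal_matching_def
  proof (intro conjI allI impI)
    fix M' assume "matching E M'" "M \<subseteq> M'"
    with M assms(1) show "M' = M"
      by (metis card_seteq matching_finite subset_trans)
  qed (use M in blast)
  with M that show ?thesis by blast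
qed

lemma equimatchable_card_le:
  assumes "finite E" "equimatchable E" "maximal_matching E M" "matching E N"
  shows "card N \<le> card M"
proof -
  obtain N' where "maximal_matching E N'" "N \<subseteq> N'"
    using matching_extend_maximal assms(1,4) by blast
  with assms show ?thesis
    unfolding equimatchable_def by (metis card_mono matching_finite maximal_matchingD)
qed

lemma equimatchable_maximalI:
  assumes "finite E" "equimatchable E" "maximal_matching E M" "matching E N" "card N = card M"
  shows "maximal_matching E N"
proof -
  obtain N' where N': "maximal_matching E N'" "N \<subseteq> N'"
    using matching_extend_maximal assms(1,4) by blast
  then have "card N' = card N"
    using assms(2,3,5) unfolding equimatchable_def by metis
  then have "N = N'"
    using N' assms(1) by (metis card_subset_eq matching_finite maximal_matchingD)
  with N' show ?thesis by simp
qed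

lemma matching_exchange:
  assumes g: "graph V E" and M: "matching E M" and X: "X \<subseteq> M" and D: "matching E D"
    and avoid: "\<Union>D \<inter> \<Union>M \<subseteq> \<Union>X"
  shows "matching E (D \<union> (M - X))"
    and "card (D \<union> (M - X)) = card D + (card M - card X)"
    and "\<Union>(D \<union> (M - X)) = \<Union>D \<union> (\<Union>M - \<Union>X)"
proof -
  have fin: "finite M" "finite X" "finite D"
    using M D X matching_finite[OF graph_finite_edges[OF g]] finite_subset by blast+
  have rest: "\<Union>(M - X) = \<Union>M - \<Union>X"
    by (rule matching_Union_Diff[OF M X])
  then have sep: "\<Union>D \<inter> \<Union>(M - X) = {}"
    using avoid by blast
  show "matching E (D \<union> (M - X))"
    using matching_Un[OF D matching_subset[OF M] sep] by blast
  have "D \<inter> (M - X) = {}"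
    using sep D graph_edge_nonempty[OF g] matching_subset_edges by blast
  then show "card (D \<union> (M - X)) = card D + (card M - card X)"
    using fin X by (simp add: card_Un_disjoint card_Diff_subset)
  show "\<Union>(D \<union> (M - X)) = \<Union>D \<union> (\<Union>M - \<Union>X)"
    using rest by blast
qed

lemma maximal_matching_swap:
  assumes g: "graph V E" and eq: "equimatchable E" and max: "maximal_matching E M"
    and e: "e \<in> M" "z \<in> e" and x: "x \<notin> \<Union>M" and xz: "{x, z} \<in> E"
  shows "maximal_matching E (insert {x, z} (M - {e}))"
    and "\<Union>(insert {x, z} (M - {e})) = insert x (insert z (\<Union>M - e))"
proof -
  have M: "matching E M"
    using max by (rule maximal_matchingD)
  have D: "matching E {{x, z}}"
    using matching_singleton[OF xz] .
  have avoid: "\<Union>{{x, z}} \<inter> \<Union>M \<subseteq> \<Union>{e}"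
    using x e by auto
  note ex = matching_exchange[OF g M _ D avoid]
  have "card M > 0"
    using e(1) matching_finite[OF graph_finite_edges[OF g] M] card_gt_0_iff by blast
  then have "card (insert {x, z} (M - {e})) = card M"
    using ex(2) e(1) by simp
  then show "maximal_matching E (insert {x, z} (M - {e}))"
    using equimatchable_maximalI[OF graph_finite_edges[OF g] eq max] ex(1) e(1) by simp
  show "\<Union>(insert {x, z} (M - {e})) = insert x (insert z (\<Union>M - e))"
    using ex(3) e(1) by simp
qed

subsection \<open>Edge stability\<close>

lemma maximal_matching_delete_edge:
  assumes g: "graph V E" and max: "maximal_matching E M" and uv: "{u, v} \<in> M"
    and covered: "\<And>a f. a \<in> {u, v} \<Longrightarrow> {a, f} \<in> E \<Longrightarrow> f \<in> \<Union>M"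
  shows "maximal_matching (E - {{u, v}}) (M - {{u, v}})"
proof -
  let ?e = "{u, v}"
  have M: "matching E M"
    using max by (rule maximal_matchingD)
  have M': "matching (E - {?e}) (M - {?e})"
    using M unfolding matching_def by blast
  have rest: "\<Union>(M - {?e}) = \<Union>M - {u, v}"
    using matching_Union_Diff[OF M, of "{?e}"] uv by simp
  have g': "graph V (E - {?e})"
    using graph_subset_edges[OF g] by blast
  show ?thesis
    unfolding maximal_matching_iff[OF g' M']
  proof (intro ballI notI)
    fix d assume d: "d \<in> E - {?e}" "d \<inter> \<Union>(M - {?e}) = {}"
    obtain a b where ab: "d = {a, b}" "a \<noteq> b"
      using g d(1) by (blast elim: graph_edgeE)
    have "d \<inter> \<Union>M \<noteq> {}"
      using maximal_matching_meets[OF g max] d(1) by blast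
    then have ends: "a \<in> {u, v} \<or> b \<in> {u, v}"
      using d(2) rest ab(1) by blast
    have "\<not> (a \<in> {u, v} \<and> b \<in> {u, v})"
      using d(1) ab by auto
    then have "(a \<in> {u, v} \<and> b \<notin> \<Union>M) \<or> (b \<in> {u, v} \<and> a \<notin> \<Union>M)"
      using ends d(2) rest ab(1) by blast
    moreover have "{a, b} \<in> E" "{b, a} \<in> E"
      using d(1) ab(1) by (simp_all add: insert_commute)
    ultimately show False
      using covered by blast
  qed
qed

lemma maximal_matching_restore_edge:
  assumes g: "graph V E" and max: "maximal_matching (E - {e}) N" and e: "e \<inter> \<Union>N \<noteq> {}"
  shows "maximal_matching E N"
proof -
  have N: "matching E N"
    using maximal_matchingD[OF max] unfolding matching_def by blast
  have g': "graph V (E - {e})"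
    using graph_subset_edges[OF g] by blast
  have "d \<inter> \<Union>N \<noteq> {}" if "d \<in> E" for d
    using maximal_matching_meets[OF g' max, of d] e that by (cases "d = e") auto
  then show ?thesis
    unfolding maximal_matching_iff[OF g N] by blast
qed

lemma edge_stable_exposed_neighbour:
  assumes g: "graph V E" and es: "edge_stable E" and max: "maximal_matching E M"
    and uv: "{u, v} \<in> M" and w: "w \<notin> {u, v}" "{u, w} \<in> E \<or> {v, w} \<in> E"
  shows "\<exists>a\<in>{u, v}. \<exists>f. f \<notin> \<Union>M \<and> {a, f} \<in> E"
proof (rule ccontr)
  assume "\<not> ?thesis"
  then have max': "maximal_matching (E - {{u, v}}) (M - {{u, v}})"
    using maximal_matching_delete_edge[OF g max uv] by blast
  let ?e = "{u, v}"
  have fin: "finite E" "finite M"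
    using graph_finite_edges[OF g] matching_finite maximal_matchingD[OF max] by blast+
  have "?e \<in> E"
    using uv max maximal_matchingD matching_subset_edges by blast
  then have eq: "equimatchable E" and eq': "equimatchable (E - {?e})"
    using es unfolding edge_stable_def by auto
  obtain x where x: "x \<in> {u, v}" "{x, w} \<in> E"
    using w(2) by blast
  have "{x, w} \<noteq> ?e"
    using w(1) x(1) by (auto simp: doubleton_eq_iff)
  with x(2) have "matching (E - {?e}) {{x, w}}"
    by (intro matching_singleton) blast
  then obtain N where N: "maximal_matching (E - {?e}) N" "{x, w} \<in> N"
    using matching_extend_maximal[of "E - {?e}"] fin(1) by blast
  have "?e \<inter> \<Union>N \<noteq> {}"
    using N(2) x(1) by blast
  then have "card N = card M"
    using maximal_matching_restore_edge[OF g N(1)] eq max unfolding equimatchable_def by blast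
  moreover have "card N = card (M - {?e})"
    using eq' N(1) max' unfolding equimatchable_def by blast
  moreover have "card M > 0"
    using uv fin(2) card_gt_0_iff by blast
  ultimately show False
    using uv fin(2) by simp
qed

definition no_isolated_edge :: "'a set set \<Rightarrow> bool" where
  "no_isolated_edge E \<longleftrightarrow> (\<forall>u v. {u, v} \<in> E \<longrightarrow> (\<exists>w. w \<notin> {u, v} \<and> ({u, w} \<in> E \<or> {v, w} \<in> E)))"

lemma rtrancl_leaves_set:
  assumes "(a, z) \<in> r\<^sup>*" "a \<in> A" "z \<notin> A"
  shows "\<exists>x\<in>A. \<exists>y. y \<notin> A \<and> (x, y) \<in> r"
  using assms by (induction rule: converse_rtrancl_induct) blast+

lemma cut_vertex_no_isolated_edge:
  assumes g: "graph V E" and conn: "connected_graph V E" and cut: "cut_vertex V E c"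
  shows "no_isolated_edge E"
  unfolding no_isolated_edge_def
proof (intro allI impI)
  fix u v assume uv: "{u, v} \<in> E"
  obtain x y where xy: "x \<in> V" "y \<in> V" "x \<noteq> c" "y \<noteq> c" "c \<in> V"
      "(x, y) \<notin> {(a, b). {a, b} \<in> del_vertex c E}\<^sup>*"
    using cut unfolding cut_vertex_def by blast
  have "x \<noteq> y"
    using xy(6) by auto
  then obtain z where z: "z \<in> V" "z \<notin> {u, v}"
    using xy by auto
  moreover have "u \<in> V"
    using graph_edge_vertices[OF g uv] by simp
  ultimately have "(u, z) \<in> {(a, b). {a, b} \<in> E}\<^sup>*"
    using conn unfolding connected_graph_def by blast
  then have "\<exists>p\<in>{u, v}. \<exists>w. w \<notin> {u, v} \<and> (p, w) \<in> {(a, b). {a, b} \<in> E}"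
    using rtrancl_leaves_set[of u z _ "{u, v}"] z(2) by blast
  then show "\<exists>w. w \<notin> {u, v} \<and> ({u, w} \<in> E \<or> {v, w} \<in> E)"
    by blast
qed

locale edge_stable_graph =
  fixes V :: "'a set" and E :: "'a set set"
  assumes graph: "graph V E" and edge_stable: "edge_stable E" and no_isolated_edge: "no_isolated_edge E"
begin

lemma finite_edges: "finite E"
  using graph by (rule graph_finite_edges)

lemma equimatchable: "equimatchable E"
  using edge_stable unfolding edge_stable_def by blast

lemma matched_edge_exposed_neighbour:
  assumes "maximal_matching E M" "{u, v} \<in> M"
  obtains a f where "a \<in> {u, v}" "f \<in> V - \<Union>M" "{a, f} \<in> E"
proof -
  have "{u, v} \<in> E"
    using assms maximal_matchingD matching_subset_edges by blast
  then obtain w where "w \<notin> {u, v}" "{u, w} \<in> E \<or> {v, w} \<in> E"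
    using no_isolated_edge unfolding no_isolated_edge_def by blast
  then obtain a f where "a \<in> {u, v}" "f \<notin> \<Union>M" "{a, f} \<in> E"
    using edge_stable_exposed_neighbour[OF graph edge_stable assms] by blast
  with that show ?thesis
    using graph_edge_vertices[OF graph] by blast
qed

lemma exchange_card_le:
  assumes max: "maximal_matching E M" and X: "X \<subseteq> M" and D: "matching E D"
    and avoid: "\<Union>D \<inter> \<Union>M \<subseteq> \<Union>X"
  shows "card D \<le> card X"
proof -
  have M: "matching E M"
    using max by (rule maximal_matchingD)
  have "card (D \<union> (M - X)) \<le> card M"
    using equimatchable_card_le[OF finite_edges equimatchable max]
      matching_exchange(1)[OF graph M X D avoid] by blast
  moreover have "card X \<le> card M"
    using X card_mono matching_finite[OF finite_edges M] by blast
  ultimately show ?thesis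
    using matching_exchange(2)[OF graph M X D avoid] by simp
qed

lemma exchange_maximal:
  assumes max: "maximal_matching E M" and X: "X \<subseteq> M" and D: "matching E D"
    and avoid: "\<Union>D \<inter> \<Union>M \<subseteq> \<Union>X" and card: "card D = card X"
  shows "maximal_matching E (D \<union> (M - X))" "\<Union>(D \<union> (M - X)) = \<Union>D \<union> (\<Union>M - \<Union>X)"
proof -
  have M: "matching E M"
    using max by (rule maximal_matchingD)
  have "card X \<le> card M"
    using X card_mono matching_finite[OF finite_edges M] by blast
  then show "maximal_matching E (D \<union> (M - X))"
    using equimatchable_maximalI[OF finite_edges equimatchable max]
      matching_exchange(1,2)[OF graph M X D avoid] card by simp
  show "\<Union>(D \<union> (M - X)) = \<Union>D \<union> (\<Union>M - \<Union>X)"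
    by (rule matching_exchange(3)[OF graph M X D avoid])
qed

lemma no_augmenting_path3:
  assumes max: "maximal_matching E M" and uv: "{u, v} \<in> M"
    and f: "f1 \<in> V - \<Union>M" "f2 \<in> V - \<Union>M" "f1 \<noteq> f2" and uf: "{u, f1} \<in> E" "{v, f2} \<in> E"
  shows False
proof -
  let ?D = "{{f1, u}, {v, f2}}"
  have "u \<noteq> v"
    using graph_edge_distinct[OF graph] uv max maximal_matchingD matching_subset_edges by blast
  moreover have "f1 \<noteq> v" "f2 \<noteq> u"
    using f uv by blast+
  ultimately have D: "matching E ?D" "card ?D = 2"
    using matching_pair[of "{f1, u}" E "{v, f2}"] uf f(3) by (auto simp: insert_commute doubleton_eq_iff)
  have "\<Union>?D \<inter> \<Union>M \<subseteq> \<Union>{{u, v}}"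
    using f by blast
  then have "card ?D \<le> card {{u, v}}"
    using exchange_card_le[OF max _ D(1)] uv by blast
  with D(2) show False
    by simp
qed

lemma no_augmenting_path5:
  assumes max: "maximal_matching E M" and u': "{u, u'} \<in> M" and v': "{v, v'} \<in> M"
    and two: "{u, u'} \<noteq> {v, v'}" "{u, u'} \<inter> {v, v'} = {}" and uv: "{u, v} \<in> E"
    and f: "f1 \<in> V - \<Union>M" "f2 \<in> V - \<Union>M" "f1 \<noteq> f2" and uf: "{u', f1} \<in> E" "{v', f2} \<in> E"
  shows False
proof -
  let ?D = "{{f1, u'}, {u, v}, {v', f2}}"
  let ?X = "{{u, u'}, {v, v'}}"
  have "u' \<noteq> u" "v' \<noteq> v"
    using graph_edge_distinct[OF graph] u' v' max maximal_matchingD matching_subset_edges by blast+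
  moreover have "f1 \<notin> {u, u', v, v'}" "f2 \<notin> {u, u', v, v'}"
    using f u' v' by blast+
  moreover have "u \<noteq> v'" "u' \<noteq> v" "u' \<noteq> v'"
    using two(2) by blast+
  ultimately have "matching E {{u, v}, {v', f2}}" "{f1, u'} \<inter> \<Union>{{u, v}, {v', f2}} = {}"
    using matching_pair[OF uv uf(2)] f(3) by (auto simp: insert_commute)
  moreover have "{f1, u'} \<in> E"
    using uf(1) by (simp add: insert_commute)
  ultimately have D: "matching E ?D"
    using matching_insert by blast
  have "card ?D = 3"
    using \<open>f1 \<notin> {u, u', v, v'}\<close> \<open>f2 \<notin> {u, u', v, v'}\<close> f(3)
    by (auto simp: doubleton_eq_iff)
  have "\<Union>?D \<inter> \<Union>M \<subseteq> \<Union>?X"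
    using f by blast
  moreover have "?X \<subseteq> M"
    using u' v' by blast
  ultimately have "card ?D \<le> card ?X"
    using exchange_card_le[OF max _ D] by blast
  with \<open>card ?D = 3\<close> show False
    using two(1) by simp
qed

lemma exposure_shift:
  assumes max: "maximal_matching E M" and exposed: "V - \<Union>M = insert x R" "x \<notin> R"
    and zq: "{z, q} \<in> M" and xz: "{x, z} \<in> E"
  shows "maximal_matching E (insert {x, z} (M - {{z, q}}))"
    and "V - \<Union>(insert {x, z} (M - {{z, q}})) = insert q R"
proof -
  have x: "x \<notin> \<Union>M"
    using exposed by blast
  note swap = maximal_matching_swap[OF graph equimatchable max zq _ x xz]
  show "maximal_matching E (insert {x, z} (M - {{z, q}}))"
    using swap(1) by simp
  have zqE: "{z, q} \<in> E"
    using zq max maximal_matchingD matching_subset_edges by blast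
  have "q \<in> V" "z \<noteq> q"
    using graph_edge_vertices[OF graph zqE] graph_edge_distinct[OF graph zqE] by simp_all
  moreover have "q \<in> \<Union>M" "z \<in> \<Union>M"
    using zq by blast+
  ultimately show "V - \<Union>(insert {x, z} (M - {{z, q}})) = insert q R"
    using swap(2) exposed by auto
qed

end

subsection \<open>Blossoms\<close>

definition split_at :: "'a set \<Rightarrow> 'a set set \<Rightarrow> 'a set set \<Rightarrow> bool" where
  "split_at S N M \<longleftrightarrow> {e \<in> M. e \<inter> S = {}} = N \<and> (\<forall>e\<in>M. e \<inter> S \<noteq> {} \<longrightarrow> e \<subseteq> S)"

text \<open>Each vertex \<open>y\<close> of a blossom \<open>S\<close> can be made the only exposed vertex of \<open>S\<close> by a maximal
  matching that leaves exactly \<open>R\<close> exposed elsewhere and agrees with the fixed matching \<open>N\<close>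
  outside \<open>S\<close>.\<close>

definition blossom :: "'a set \<Rightarrow> 'a set set \<Rightarrow> 'a set \<Rightarrow> 'a set set \<Rightarrow> 'a set \<Rightarrow> bool" where
  "blossom V E R N S \<longleftrightarrow> S \<subseteq> V \<and> S \<inter> R = {} \<and> (\<exists>a\<in>S. \<exists>b\<in>S. a \<noteq> b) \<and>
     (\<forall>y\<in>S. \<exists>M. maximal_matching E M \<and> V - \<Union>M = insert y R \<and> split_at S N M)"

lemma blossom_subset: "blossom V E R N S \<Longrightarrow> S \<subseteq> V - R"
  unfolding blossom_def by blast

lemma blossom_matching:
  assumes "blossom V E R N S" "y \<in> S"
  obtains M where "maximal_matching E M" "V - \<Union>M = insert y R" "split_at S N M"
  using assms unfolding blossom_def by blast

lemma blossom_other_vertex: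
  assumes "blossom V E R N S" "s \<in> S"
  obtains t where "t \<in> S" "t \<noteq> s"
proof -
  obtain a b where "a \<in> S" "b \<in> S" "a \<noteq> b"
    using assms(1) unfolding blossom_def by blast
  with that show ?thesis
    by blast
qed

lemma split_at_subset: "split_at S N M \<Longrightarrow> N \<subseteq> M"
  unfolding split_at_def by blast

lemma split_at_inside: "split_at S N M \<Longrightarrow> e \<in> M \<Longrightarrow> e \<inter> S \<noteq> {} \<Longrightarrow> e \<subseteq> S"
  unfolding split_at_def by blast

lemma split_at_outside: "split_at S N M \<Longrightarrow> e \<in> M \<Longrightarrow> e \<inter> S = {} \<Longrightarrow> e \<in> N"
  unfolding split_at_def by blast

lemma split_at_grow:
  assumes M: "matching E M" and split: "split_at S N M" and e: "e \<in> N" "e \<noteq> {}"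
  shows "split_at (S \<union> e) (N - {e}) M"
  unfolding split_at_def
proof (intro conjI ballI impI)
  have eM: "e \<in> M"
    using split e(1) split_at_subset by blast
  have N: "N = {d \<in> M. d \<inter> S = {}}"
    using split unfolding split_at_def by blast
  have "{d \<in> M. d \<inter> (S \<union> e) = {}} = {d \<in> N. d \<inter> e = {}}"
    unfolding N by blast
  also have "\<dots> = N - {e}"
  proof
    show "{d \<in> N. d \<inter> e = {}} \<subseteq> N - {e}"
      using e(2) by blast
    show "N - {e} \<subseteq> {d \<in> N. d \<inter> e = {}}"
      using matching_disjoint[OF M _ eM] split_at_subset[OF split] by blast
  qed
  finally show "{d \<in> M. d \<inter> (S \<union> e) = {}} = N - {e}" .
  fix d assume d: "d \<in> M" "d \<inter> (S \<union> e) \<noteq> {}"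
  show "d \<subseteq> S \<union> e"
  proof (cases "d \<inter> S = {}")
    case True
    then have "d \<inter> e \<noteq> {}"
      using d(2) by blast
    then have "d = e"
      using matching_disjoint[OF M d(1) eM] by blast
    then show ?thesis by blast
  next
    case False
    then show ?thesis
      using split d(1) unfolding split_at_def by blast
  qed
qed

lemma split_at_swap:
  assumes M: "matching E M" and split: "split_at S N M" and e: "e \<in> N" "e \<noteq> {}"
    and d: "d \<subseteq> S \<union> e" "d \<inter> S \<noteq> {}"
  shows "split_at (S \<union> e) (N - {e}) (insert d (M - {e}))"
proof -
  have grown: "{x \<in> M. x \<inter> (S \<union> e) = {}} = N - {e}" "\<forall>x\<in>M. x \<inter> (S \<union> e) \<noteq> {} \<longrightarrow> x \<subseteq> S \<union> e"
    using split_at_grow[OF assms(1-4)] unfolding split_at_def by blast+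
  have "{x \<in> insert d (M - {e}). x \<inter> (S \<union> e) = {}} = {x \<in> M. x \<inter> (S \<union> e) = {}}"
    using d(2) e(2) by auto
  with grown d(1) show ?thesis
    unfolding split_at_def by auto
qed

lemma split_at_exchange:
  assumes split: "split_at S N M" and X: "X \<subseteq> M" "\<Union>X \<subseteq> S" "{} \<notin> X"
    and D: "\<Union>D \<subseteq> S" "{} \<notin> D"
  shows "split_at S N (D \<union> (M - X))"
  unfolding split_at_def
proof (intro conjI ballI impI)
  have meets: "e \<inter> S \<noteq> {}" if "e \<in> D \<union> X" for e
  proof -
    have "e \<subseteq> S"
      using that X(2) D(1) by blast
    moreover have "e \<noteq> {}"
      using that X(3) D(2) by blast
    ultimately show ?thesis
      by blast
  qed
  have "{e \<in> D \<union> (M - X). e \<inter> S = {}} = {e \<in> M. e \<inter> S = {}}"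
    using meets by blast
  also have "\<dots> = N"
    using split unfolding split_at_def by blast
  finally show "{e \<in> D \<union> (M - X). e \<inter> S = {}} = N" .
  fix e assume "e \<in> D \<union> (M - X)" "e \<inter> S \<noteq> {}"
  then show "e \<subseteq> S"
    using split_at_inside[OF split] D(1) by blast
qed

lemma blossom_extend:
  assumes blossom: "blossom V E R N S" and e: "e \<in> N" "e \<subseteq> V - R" "e \<noteq> {}"
    and ends: "\<And>y. y \<in> e \<Longrightarrow>
      \<exists>M. maximal_matching E M \<and> V - \<Union>M = insert y R \<and> split_at (S \<union> e) (N - {e}) M"
  shows "blossom V E R (N - {e}) (S \<union> e)"
  unfolding blossom_def
proof (intro conjI ballI)
  show "S \<union> e \<subseteq> V" "(S \<union> e) \<inter> R = {}"
    using blossom_subset[OF blossom] e(2) by blast+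
  show "\<exists>a\<in>S \<union> e. \<exists>b\<in>S \<union> e. a \<noteq> b"
    using blossom unfolding blossom_def by blast
  fix y assume "y \<in> S \<union> e"
  then show "\<exists>M. maximal_matching E M \<and> V - \<Union>M = insert y R \<and> split_at (S \<union> e) (N - {e}) M"
  proof
    assume "y \<in> S"
    then obtain M where "maximal_matching E M" "V - \<Union>M = insert y R" "split_at S N M"
      by (rule blossom_matching[OF blossom])
    then show ?thesis
      using split_at_grow[OF maximal_matchingD _ e(1,3)] by blast
  qed (rule ends)
qed

context edge_stable_graph
begin

lemma blossom_no_edge_to_residual:
  assumes "blossom V E R N S" "y \<in> S" "r \<in> R"
  shows "{y, r} \<notin> E"
proof -
  obtain M where "maximal_matching E M" "V - \<Union>M = insert y R" "split_at S N M"
    using blossom_matching[OF assms(1,2)] .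
  then show ?thesis
    using maximal_matching_no_exposed_edge[OF graph] assms(3) by blast
qed

text \<open>Edge stability supplies the edge closing an odd cycle through the newly exposed vertex.\<close>

lemma blossom_exposed_neighbour:
  assumes blossom: "blossom V E R N S" and max: "maximal_matching E M"
    and exposed: "V - \<Union>M = insert q R" and d: "d \<in> M" "d \<subseteq> S"
  obtains a where "a \<in> S" "{a, q} \<in> E"
proof -
  have "d \<in> E"
    using d(1) max maximal_matchingD matching_subset_edges by blast
  then obtain u v where "d = {u, v}"
    using graph by (blast elim: graph_edgeE)
  then obtain a f where a: "a \<in> d" "f \<in> V - \<Union>M" "{a, f} \<in> E"
    using matched_edge_exposed_neighbour[OF max] d(1) by blast
  have "a \<in> S"
    using a(1) d(2) by blast
  moreover from this have "f \<notin> R"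
    using blossom_no_edge_to_residual[OF blossom] a(3) by blast
  then have "f = q"
    using a(2) exposed by blast
  then show ?thesis
    using that \<open>a \<in> S\<close> a(3) by blast
qed

lemma blossom_expose_partner:
  assumes blossom: "blossom V E R N S" and s: "s \<in> S" and sw: "{s, w} \<in> E"
    and w: "w \<notin> S" "w \<notin> R"
  obtains q M where "{w, q} \<in> N" "q \<in> V - R" "maximal_matching E M" "V - \<Union>M = insert q R"
    "split_at (S \<union> {w, q}) (N - {{w, q}}) M" "\<exists>d\<in>M. d \<subseteq> S"
proof -
  have SV: "S \<subseteq> V - R"
    using blossom by (rule blossom_subset)
  obtain Ms where Ms: "maximal_matching E Ms" "V - \<Union>Ms = insert s R" "split_at S N Ms"
    using blossom_matching[OF blossom s] .
  have sR: "s \<notin> R"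
    using s SV by blast
  have "w \<notin> V - \<Union>Ms"
    using Ms(2) w s by auto
  then have "w \<in> \<Union>Ms"
    using graph_edge_vertices[OF graph sw] by blast
  then obtain q where wq: "{w, q} \<in> Ms"
    using matching_partner[OF graph maximal_matchingD[OF Ms(1)]] by blast
  let ?e = "{w, q}"
  have eS: "?e \<inter> S = {}"
    using split_at_inside[OF Ms(3) wq(1)] w(1) by blast
  then have eN: "?e \<in> N"
    by (rule split_at_outside[OF Ms(3) wq(1)])
  have "q \<in> V - R"
    using graph_edge_vertices[OF graph] wq(1) Ms maximal_matchingD matching_subset_edges by blast
  define Mq where "Mq = insert {s, w} (Ms - {?e})"
  have Mq: "maximal_matching E Mq" "V - \<Union>Mq = insert q R"
    unfolding Mq_def using exposure_shift[OF Ms(1,2) sR wq(1) sw] by blast+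
  have split_q: "split_at (S \<union> ?e) (N - {?e}) Mq"
    unfolding Mq_def by (rule split_at_swap[OF maximal_matchingD[OF Ms(1)] Ms(3) eN]) (use s in auto)
  obtain t where t: "t \<in> S" "t \<noteq> s"
    using blossom_other_vertex[OF blossom s] .
  have "t \<notin> V - \<Union>Ms"
    using Ms(2) t SV by auto
  then obtain d where d: "d \<in> Ms" "t \<in> d"
    using t(1) SV by blast
  then have "d \<subseteq> S"
    using split_at_inside[OF Ms(3)] t(1) by blast
  moreover from this have "d \<in> Mq"
    using d eS unfolding Mq_def by blast
  ultimately show ?thesis
    using that eN \<open>q \<in> V - R\<close> Mq split_q by blast
qed

text \<open>The matching edge \<open>wq\<close> at \<open>w\<close> joins the blossom: exchanging it for \<open>sw\<close> in the
  matching exposing \<open>s\<close> exposes \<open>q\<close>, and exchanging it for \<open>aq\<close> in the matching exposing \<open>a\<close>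
  exposes \<open>w\<close>.\<close>

lemma blossom_grow:
  assumes blossom: "blossom V E R N S" and s: "s \<in> S" and sw: "{s, w} \<in> E"
    and w: "w \<notin> S" "w \<notin> R"
  obtains q where "blossom V E R (N - {{w, q}}) (S \<union> {w, q})"
proof -
  obtain q Mq where eN: "{w, q} \<in> N" and qR: "q \<in> V - R"
      and Mq: "maximal_matching E Mq" "V - \<Union>Mq = insert q R"
        "split_at (S \<union> {w, q}) (N - {{w, q}}) Mq" "\<exists>d\<in>Mq. d \<subseteq> S"
    using blossom_expose_partner[OF assms] .
  obtain a where a: "a \<in> S" "{a, q} \<in> E"
    using blossom_exposed_neighbour[OF blossom Mq(1,2)] Mq(4) by blast
  obtain Ma where Ma: "maximal_matching E Ma" "V - \<Union>Ma = insert a R" "split_at S N Ma"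
    using blossom_matching[OF blossom a(1)] .
  have aR: "a \<notin> R"
    using a(1) blossom_subset[OF blossom] by blast
  have "{q, w} \<in> Ma"
    using split_at_subset[OF Ma(3)] eN insert_commute[of w q] by auto
  note Mw = exposure_shift[OF Ma(1,2) aR this a(2)]
  have "split_at (S \<union> {w, q}) (N - {{w, q}}) (insert {a, q} (Ma - {{q, w}}))"
    unfolding insert_commute[of q w]
    by (rule split_at_swap[OF maximal_matchingD[OF Ma(1)] Ma(3) eN]) (use a(1) in auto)
  with Mw Mq(1-3) have "blossom V E R (N - {{w, q}}) (S \<union> {w, q})"
    using blossom_extend[OF blossom eN] qR w(2) graph_edge_vertices[OF graph sw] by blast
  with that show ?thesis .
qed

lemma blossom_unreachable:
  assumes "(s, r) \<in> {(a, b). {a, b} \<in> E}\<^sup>*" "r \<in> R"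
  shows "blossom V E R N S \<Longrightarrow> s \<in> S \<Longrightarrow> False"
  using assms(1)
proof (induction arbitrary: N S rule: converse_rtrancl_induct)
  case base
  then show ?case
    using assms(2) unfolding blossom_def by blast
next
  case (step s w)
  then have sw: "{s, w} \<in> E"
    by simp
  consider "w \<in> S" | "w \<in> R" | "w \<notin> S" "w \<notin> R"
    by blast
  then show ?case
  proof cases
    case 1
    then show False
      using step.IH step.prems(1) by blast
  next
    case 2
    then show False
      using blossom_no_edge_to_residual[OF step.prems] sw by blast
  next
    case 3
    then obtain q where "blossom V E R (N - {{w, q}}) (S \<union> {w, q})"
      using blossom_grow[OF step.prems sw] by blast
    then show False
      using step.IH by blast
  qed
qed

lemma blossom_impossible:
  assumes "connected_graph V E" "blossom V E R N S" "R \<noteq> {}"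
  shows False
proof -
  obtain s r where s: "s \<in> S" and r: "r \<in> R"
    using assms(2,3) unfolding blossom_def by blast
  obtain M where "maximal_matching E M" "V - \<Union>M = insert s R" "split_at S N M"
    using blossom_matching[OF assms(2) s] .
  then have "(s, r) \<in> {(a, b). {a, b} \<in> E}\<^sup>*"
    using assms(1) r unfolding connected_graph_def by blast
  then show False
    using blossom_unreachable[OF _ r assms(2) s] by blast
qed

lemma exchange_moves_exposure:
  assumes max: "maximal_matching E M" and split: "split_at S N M" and f: "f \<in> S" "f \<notin> \<Union>M"
    and X: "X \<subseteq> M" "\<Union>X \<subseteq> S" "y \<in> \<Union>X"
    and D: "matching E D" "card D = card X" "\<Union>D = insert f (\<Union>X) - {y}"
  shows "maximal_matching E (D \<union> (M - X))" "V - \<Union>(D \<union> (M - X)) = insert y (V - \<Union>M - {f})"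
    and "split_at S N (D \<union> (M - X))"
proof -
  have UD: "\<Union>D \<subseteq> insert f (\<Union>X)"
    unfolding D(3) by blast
  then have avoid: "\<Union>D \<inter> \<Union>M \<subseteq> \<Union>X"
    using f(2) by blast
  note ex = exchange_maximal[OF max X(1) D(1) avoid D(2)]
  show "maximal_matching E (D \<union> (M - X))"
    by (rule ex(1))
  have "X \<subseteq> E"
    using X(1) max maximal_matchingD matching_subset_edges by blast
  then have "y \<in> V"
    using graph_Union_subset[OF graph] X(3) by blast
  then show "V - \<Union>(D \<union> (M - X)) = insert y (V - \<Union>M - {f})"
    unfolding ex(2) D(3) using f(2) X(1,3) by auto
  have "{} \<notin> X"
    using X(1) max graph_edge_nonempty[OF graph] maximal_matchingD matching_subset_edges by blast
  moreover have "{} \<notin> D"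
    using D(1) graph_edge_nonempty[OF graph] matching_subset_edges by blast
  moreover have "\<Union>D \<subseteq> S"
    using UD X(2) f(1) by blast
  ultimately show "split_at S N (D \<union> (M - X))"
    using split_at_exchange[OF split X(1,2)] by blast
qed

lemma blossomI:
  assumes max: "maximal_matching E M" and split: "split_at S N M"
    and f: "f \<in> S" "f \<notin> \<Union>M" and S: "S \<subseteq> V" "S - {f} \<subseteq> \<Union>M" "t \<in> S" "t \<noteq> f"
    and exchange: "\<And>y. y \<in> S - {f} \<Longrightarrow> \<exists>X D. X \<subseteq> M \<and> \<Union>X \<subseteq> S \<and> y \<in> \<Union>X \<and> matching E D
       \<and> card D = card X \<and> \<Union>D = insert f (\<Union>X) - {y}"
  shows "blossom V E (V - \<Union>M - {f}) N S"
  unfolding blossom_def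
proof (intro conjI ballI)
  show "S \<subseteq> V"
    by (rule S(1))
  show "S \<inter> (V - \<Union>M - {f}) = {}"
    using S(2) by blast
  show "\<exists>a\<in>S. \<exists>b\<in>S. a \<noteq> b"
    using S(3,4) f(1) by blast
  fix y assume y: "y \<in> S"
  show "\<exists>M'. maximal_matching E M' \<and> V - \<Union>M' = insert y (V - \<Union>M - {f}) \<and> split_at S N M'"
  proof (cases "y = f")
    case True
    have "V - \<Union>M = insert f (V - \<Union>M - {f})"
      using f S(1) by blast
    with True show ?thesis
      using max split by blast
  next
    case False
    with y have "y \<in> S - {f}"
      by blast
    then obtain X D where "X \<subseteq> M" "\<Union>X \<subseteq> S" "y \<in> \<Union>X"
        and "matching E D" "card D = card X" "\<Union>D = insert f (\<Union>X) - {y}"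
      using exchange by meson
    from exchange_moves_exposure[OF max split f this] show ?thesis
      by blast
  qed
qed

lemma triangle_blossom:
  assumes max: "maximal_matching E M" and ab: "{a, b} \<in> M" and f: "f \<notin> \<Union>M"
    and fa: "{f, a} \<in> E" and fb: "{f, b} \<in> E"
  shows "blossom V E (V - \<Union>M - {f}) {e \<in> M. e \<inter> {f, a, b} = {}} {f, a, b}"
proof -
  have M: "matching E M"
    using max by (rule maximal_matchingD)
  have "a \<noteq> b"
    using graph_edge_distinct[OF graph] ab M matching_subset_edges by blast
  have "f \<noteq> a" "f \<noteq> b"
    using f ab by blast+
  have split: "split_at {f, a, b} {e \<in> M. e \<inter> {f, a, b} = {}} M"
    unfolding split_at_def
    using f matching_edge_unique[OF M ab] by blast
  show ?thesis
  proof (rule blossomI[OF max split _ f])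
    fix y assume "y \<in> {f, a, b} - {f}"
    then consider "y = a" | "y = b"
      by blast
    then show "\<exists>X D. X \<subseteq> M \<and> \<Union>X \<subseteq> {f, a, b} \<and> y \<in> \<Union>X \<and> matching E D
       \<and> card D = card X \<and> \<Union>D = insert f (\<Union>X) - {y}"
    proof cases
      case 1
      then show ?thesis
        using ab matching_singleton[OF fb] \<open>a \<noteq> b\<close> \<open>f \<noteq> a\<close>
        by (intro exI[of _ "{{a, b}}"] exI[of _ "{{f, b}}"]) auto
    next
      case 2
      then show ?thesis
        using ab matching_singleton[OF fa] \<open>a \<noteq> b\<close> \<open>f \<noteq> b\<close>
        by (intro exI[of _ "{{a, b}}"] exI[of _ "{{f, a}}"]) auto
    qed
  qed (use ab \<open>f \<noteq> a\<close> graph_edge_vertices[OF graph] fa fb in auto)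
qed

lemma pentagon_blossom:
  assumes max: "maximal_matching E M" and e1: "{a1, b1} \<in> M" and e2: "{a2, b2} \<in> M"
    and ne: "{a1, b1} \<noteq> {a2, b2}" and f: "f \<notin> \<Union>M"
    and fa1: "{f, a1} \<in> E" and fa2: "{f, a2} \<in> E" and b: "{b1, b2} \<in> E"
  shows "blossom V E (V - \<Union>M - {f}) {e \<in> M. e \<inter> {f, a1, b1, b2, a2} = {}} {f, a1, b1, b2, a2}"
proof -
  let ?S = "{f, a1, b1, b2, a2}"
  have M: "matching E M"
    using max by (rule maximal_matchingD)
  have "{a1, b1} \<inter> {a2, b2} = {}"
    using matching_disjoint[OF M e1 e2 ne] .
  moreover have "a1 \<noteq> b1" "a2 \<noteq> b2"
    using graph_edge_distinct[OF graph] e1 e2 M matching_subset_edges by blast+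
  moreover have "f \<notin> {a1, b1, a2, b2}"
    using f e1 e2 by blast
  ultimately have distinct: "a1 \<noteq> b1" "a2 \<noteq> b2" "a1 \<noteq> a2" "a1 \<noteq> b2" "b1 \<noteq> a2" "b1 \<noteq> b2"
      "f \<noteq> a1" "f \<noteq> b1" "f \<noteq> a2" "f \<noteq> b2"
    by auto
  have split: "split_at ?S {e \<in> M. e \<inter> ?S = {}} M"
    unfolding split_at_def
    using f matching_edge_unique[OF M e1] matching_edge_unique[OF M e2] by blast
  have X2: "{{a1, b1}, {a2, b2}} \<subseteq> M" "card {{a1, b1}, {a2, b2}} = 2"
    using e1 e2 ne by auto
  show ?thesis
  proof (rule blossomI[OF max split _ f])
    fix y assume "y \<in> ?S - {f}"
    then consider "y = a1" | "y = b1" | "y = b2" | "y = a2"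
      by blast
    then show "\<exists>X D. X \<subseteq> M \<and> \<Union>X \<subseteq> ?S \<and> y \<in> \<Union>X \<and> matching E D
       \<and> card D = card X \<and> \<Union>D = insert f (\<Union>X) - {y}"
    proof cases
      case 1
      have "matching E {{f, a2}, {b1, b2}}" "card {{f, a2}, {b1, b2}} = 2"
        using matching_pair[OF fa2 b] distinct by (auto simp: doubleton_eq_iff)
      with 1 X2 distinct show ?thesis
        by (intro exI[of _ "{{a1, b1}, {a2, b2}}"] exI[of _ "{{f, a2}, {b1, b2}}"]) auto
    next
      case 2
      with e1 distinct matching_singleton[OF fa1] show ?thesis
        by (intro exI[of _ "{{a1, b1}}"] exI[of _ "{{f, a1}}"]) auto
    next
      case 3
      with e2 distinct matching_singleton[OF fa2] show ?thesis
        by (intro exI[of _ "{{a2, b2}}"] exI[of _ "{{f, a2}}"]) auto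
    next
      case 4
      have "matching E {{f, a1}, {b1, b2}}" "card {{f, a1}, {b1, b2}} = 2"
        using matching_pair[OF fa1 b] distinct by (auto simp: doubleton_eq_iff)
      with 4 X2 distinct show ?thesis
        by (intro exI[of _ "{{a1, b1}, {a2, b2}}"] exI[of _ "{{f, a1}, {b1, b2}}"]) auto
    qed
  qed (use e1 e2 distinct graph_edge_vertices[OF graph] fa1 fa2 b in auto)
qed

subsection \<open>At least two exposed vertices\<close>

definition exposed_adjacent :: "'a set set \<Rightarrow> 'a set" where
  "exposed_adjacent M = {a \<in> \<Union>M. \<exists>f \<in> V - \<Union>M. {a, f} \<in> E}"

lemma exposed_adjacentI: "a \<in> \<Union>M \<Longrightarrow> f \<in> V - \<Union>M \<Longrightarrow> {a, f} \<in> E \<Longrightarrow> a \<in> exposed_adjacent M"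
  unfolding exposed_adjacent_def by blast

lemma exposed_adjacentE:
  assumes "a \<in> exposed_adjacent M"
  obtains f where "f \<in> V - \<Union>M" "{a, f} \<in> E"
  using assms unfolding exposed_adjacent_def by blast

context
  fixes M :: "'a set set"
  assumes connected: "connected_graph V E" and max: "maximal_matching E M"
    and not_single: "\<And>f. V - \<Union>M \<noteq> {f}"
begin

lemma no_blossom:
  assumes "blossom V E (V - \<Union>M - {f}) N S" "f \<in> V - \<Union>M"
  shows False
proof -
  have "V - \<Union>M - {f} \<noteq> {}"
    using not_single[of f] assms(2) by blast
  then show False
    using blossom_impossible[OF connected assms(1)] by blast
qed

lemma exposed_neighbour_adjacent:
  assumes "{a, b} \<in> E" "a \<in> V - \<Union>M"
  shows "b \<in> exposed_adjacent M"
proof -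
  have "b \<in> \<Union>M"
    using maximal_matching_no_exposed_edge[OF graph max assms(1)] assms(2) by blast
  moreover have "{b, a} \<in> E"
    using assms(1) by (simp add: insert_commute)
  ultimately show ?thesis
    using exposed_adjacentI assms(2) by blast
qed

lemma partner_exposed_neighbour:
  assumes "{u, u'} \<in> M" "u \<notin> exposed_adjacent M"
  obtains f where "f \<in> V - \<Union>M" "{u', f} \<in> E"
proof -
  obtain a f where "a \<in> {u, u'}" "f \<in> V - \<Union>M" "{a, f} \<in> E"
    using matched_edge_exposed_neighbour[OF max assms(1)] by blast
  moreover have "u \<in> \<Union>M"
    using assms(1) by blast
  ultimately show ?thesis
    using that assms(2) exposed_adjacentI by blast
qed

text \<open>Two exposed neighbours of a matched edge \<open>uv\<close> either coincide, closing a triangle, or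
  yield the augmenting path \<open>f\<^sub>1 u v f\<^sub>2\<close>.\<close>

lemma matched_edge_one_side:
  assumes uv: "{u, v} \<in> M" and u: "u \<in> exposed_adjacent M" and v: "v \<in> exposed_adjacent M"
  shows False
proof -
  obtain f1 where f1: "f1 \<in> V - \<Union>M" "{u, f1} \<in> E"
    using u by (rule exposed_adjacentE)
  obtain f2 where f2: "f2 \<in> V - \<Union>M" "{v, f2} \<in> E"
    using v by (rule exposed_adjacentE)
  show False
  proof (cases "f1 = f2")
    case True
    have "blossom V E (V - \<Union>M - {f1}) {e \<in> M. e \<inter> {f1, u, v} = {}} {f1, u, v}"
      using triangle_blossom[OF max uv] f1 f2 True by (simp add: insert_commute)
    then show False
      using no_blossom f1(1) by blast
  next
    case False
    then show False
      using no_augmenting_path3[OF max uv f1(1) f2(1)] f1(2) f2(2) by blast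
  qed
qed

text \<open>Here the partners \<open>u'\<close>, \<open>v'\<close> have exposed neighbours: a common one closes the
  pentagon \<open>f u' u v v'\<close>, distinct ones give the augmenting path \<open>f\<^sub>1 u' u v v' f\<^sub>2\<close>.\<close>

lemma edge_outside_exposed_adjacent_matched:
  assumes uv: "{u, v} \<in> E" "u \<in> \<Union>M" "v \<in> \<Union>M"
    and nonadj: "u \<notin> exposed_adjacent M" "v \<notin> exposed_adjacent M"
  shows "{u, v} \<in> M"
proof (rule ccontr)
  assume unmatched: "{u, v} \<notin> M"
  have M: "matching E M"
    using max by (rule maximal_matchingD)
  have "u \<noteq> v"
    using graph_edge_distinct[OF graph uv(1)] .
  obtain u' where u': "{u, u'} \<in> M"
    using matching_partner[OF graph M uv(2)] .
  obtain v' where v': "{v, v'} \<in> M"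
    using matching_partner[OF graph M uv(3)] .
  obtain f1 where f1: "f1 \<in> V - \<Union>M" "{u', f1} \<in> E"
    using partner_exposed_neighbour[OF u' nonadj(1)] .
  obtain f2 where f2: "f2 \<in> V - \<Union>M" "{v', f2} \<in> E"
    using partner_exposed_neighbour[OF v' nonadj(2)] .
  note two = matching_two_edges[OF M u' v' \<open>u \<noteq> v\<close> unmatched]
  show False
  proof (cases "f1 = f2")
    case True
    have "{u', u} \<in> M" "{v', v} \<in> M" "{u', u} \<noteq> {v', v}" "f1 \<notin> \<Union>M"
        "{f1, u'} \<in> E" "{f1, v'} \<in> E"
      using u' v' two(1) f1 f2 True by (simp_all add: insert_commute)
    then have "blossom V E (V - \<Union>M - {f1}) {e \<in> M. e \<inter> {f1, u', u, v, v'} = {}} {f1, u', u, v, v'}"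
      by (rule pentagon_blossom[OF max _ _ _ _ _ _ uv(1)])
    then show False
      using no_blossom f1(1) by blast
  next
    case False
    then show False
      using no_augmenting_path5[OF max u' v' two uv(1) f1(1) f2(1)] f1(2) f2(2) by blast
  qed
qed

lemma smaller_matching_not_maximal:
  assumes "matching E N" "card N < card M"
  obtains d where "d \<in> E" "d \<inter> \<Union>N = {}"
proof -
  have "\<not> maximal_matching E N"
  proof
    assume "maximal_matching E N"
    then have "card N = card M"
      using equimatchable max unfolding equimatchable_def by blast
    with assms(2) show False
      by simp
  qed
  with that show ?thesis
    using maximal_matching_iff[OF graph assms(1)] by blast
qed

text \<open>Replacing \<open>uu'\<close> and \<open>vv'\<close> by \<open>uv\<close> loses an edge, so some edge \<open>d\<close> misses the smaller
  matching; as \<open>u'\<close>, \<open>v'\<close> have no exposed neighbours, \<open>d\<close> can only be \<open>u'v'\<close>.\<close>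

lemma edge_inside_exposed_adjacent_partners_adjacent:
  assumes uv: "{u, v} \<in> E" and u': "{u, u'} \<in> M" and v': "{v, v'} \<in> M"
    and two: "{u, u'} \<noteq> {v, v'}" "{u, u'} \<inter> {v, v'} = {}"
    and nonadj: "u' \<notin> exposed_adjacent M" "v' \<notin> exposed_adjacent M"
  shows "{u', v'} \<in> E"
proof -
  have M: "matching E M"
    using max by (rule maximal_matchingD)
  let ?X = "{{u, u'}, {v, v'}}"
  have X: "?X \<subseteq> M" "card ?X = 2"
    using u' v' two(1) by auto
  have D: "matching E {{u, v}}" "\<Union>{{u, v}} \<inter> \<Union>M \<subseteq> \<Union>?X"
    using matching_singleton[OF uv] by auto
  note ex = matching_exchange[OF graph M X(1) D]
  have "card ({{u, v}} \<union> (M - ?X)) < card M"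
    using ex(2) X card_mono[OF matching_finite[OF finite_edges M] X(1)] by simp
  then obtain d where d: "d \<in> E" "d \<inter> \<Union>({{u, v}} \<union> (M - ?X)) = {}"
    using smaller_matching_not_maximal[OF ex(1)] by blast
  then obtain x y where xy: "d = {x, y}" "x \<noteq> y" "x \<in> V" "y \<in> V"
    using graph by (blast elim: graph_edgeE)
  have ends: "x \<notin> \<Union>M \<or> x \<in> {u', v'}" "y \<notin> \<Union>M \<or> y \<in> {u', v'}"
    using d(2) ex(3) xy(1) by auto
  have partner_end: "a \<in> {u', v'}"
    if "{a, b} \<in> E" "a \<in> V" "a \<notin> \<Union>M \<or> a \<in> {u', v'}" "b \<notin> \<Union>M \<or> b \<in> {u', v'}" for a b
  proof (rule ccontr)
    assume "a \<notin> {u', v'}"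
    with that(2,3) have "b \<in> exposed_adjacent M"
      using exposed_neighbour_adjacent[OF that(1)] by blast
    moreover from this have "b \<in> {u', v'}"
      using that(4) unfolding exposed_adjacent_def by blast
    ultimately show False
      using nonadj by blast
  qed
  have "{x, y} \<in> E" "{y, x} \<in> E"
    using d(1) xy(1) by (simp_all add: insert_commute)
  then have "x \<in> {u', v'}" "y \<in> {u', v'}"
    using partner_end ends xy(3,4) by blast+
  with xy d(1) show ?thesis
    by (auto simp: insert_commute)
qed

text \<open>Exchanging \<open>uu'\<close>, \<open>vv'\<close> for \<open>uv\<close>, \<open>u'v'\<close> keeps the covered vertices, and then
  edge stability at \<open>u'v'\<close> gives \<open>u'\<close> or \<open>v'\<close> an exposed neighbour, impossible since
  their partners \<open>u\<close>, \<open>v\<close> have one.\<close>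

lemma edge_inside_exposed_adjacent_matched:
  assumes uv: "{u, v} \<in> E" and adj: "u \<in> exposed_adjacent M" "v \<in> exposed_adjacent M"
  shows "{u, v} \<in> M"
proof (rule ccontr)
  assume unmatched: "{u, v} \<notin> M"
  have M: "matching E M"
    using max by (rule maximal_matchingD)
  have covered: "u \<in> \<Union>M" "v \<in> \<Union>M"
    using adj unfolding exposed_adjacent_def by blast+
  obtain u' where u': "{u, u'} \<in> M" "u' \<noteq> u"
    using matching_partner[OF graph M covered(1)] .
  obtain v' where v': "{v, v'} \<in> M" "v' \<noteq> v"
    using matching_partner[OF graph M covered(2)] .
  have nonadj: "u' \<notin> exposed_adjacent M" "v' \<notin> exposed_adjacent M"
    using matched_edge_one_side u' v' adj by blast+
  note two = matching_two_edges[OF M u'(1) v'(1) graph_edge_distinct[OF graph uv] unmatched]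
  have "{u', v'} \<in> E"
    using edge_inside_exposed_adjacent_partners_adjacent[OF uv u'(1) v'(1) two nonadj] .
  let ?X = "{{u, u'}, {v, v'}}"
  let ?D = "{{u, v}, {u', v'}}"
  have X: "?X \<subseteq> M" "card ?X = 2"
    using u' v' two(1) by auto
  have "u \<noteq> v'" "u' \<noteq> v" "u' \<noteq> v'"
    using two(2) by blast+
  then have D: "matching E ?D" "card ?D = 2" "\<Union>?D \<inter> \<Union>M \<subseteq> \<Union>?X"
    using matching_pair[OF uv \<open>{u', v'} \<in> E\<close>] u'(2) v'(2) by (auto simp: doubleton_eq_iff)
  have "\<Union>?D \<union> (\<Union>M - \<Union>?X) = \<Union>M"
    using u' v' by blast
  then obtain M2 where M2: "maximal_matching E M2" "\<Union>M2 = \<Union>M" "{u', v'} \<in> M2"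
    using exchange_maximal[OF max X(1) D(1,3)] D(2) X(2) by (metis Un_iff insertCI)
  then obtain a f where "a \<in> {u', v'}" "f \<in> V - \<Union>M" "{a, f} \<in> E"
    using matched_edge_exposed_neighbour[OF M2(1,3)] by metis
  moreover have "u' \<in> \<Union>M" "v' \<in> \<Union>M"
    using u' v' by blast+
  ultimately show False
    using nonadj exposed_adjacentI by blast
qed

lemma edge_crosses_exposed_adjacent:
  assumes uv: "{u, v} \<in> E"
  shows "u \<in> exposed_adjacent M \<longleftrightarrow> v \<notin> exposed_adjacent M"
proof
  assume "u \<in> exposed_adjacent M"
  then show "v \<notin> exposed_adjacent M"
    using matched_edge_one_side edge_inside_exposed_adjacent_matched uv by blast
next
  assume v: "v \<notin> exposed_adjacent M"
  show "u \<in> exposed_adjacent M"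
  proof (rule ccontr)
    assume u: "u \<notin> exposed_adjacent M"
    have vu: "{v, u} \<in> E"
      using uv by (simp add: insert_commute)
    have V: "u \<in> V" "v \<in> V"
      using graph_edge_vertices[OF graph uv] by simp_all
    consider "u \<notin> \<Union>M" | "v \<notin> \<Union>M" | "u \<in> \<Union>M" "v \<in> \<Union>M"
      by blast
    then show False
    proof cases
      case 1
      then show False
        using exposed_neighbour_adjacent[OF uv] V(1) v by blast
    next
      case 2
      then show False
        using exposed_neighbour_adjacent[OF vu] V(2) u by blast
    next
      case 3
      then have "{u, v} \<in> M"
        using edge_outside_exposed_adjacent_matched uv u v by blast
      then obtain a f where "a \<in> {u, v}" "f \<in> V - \<Union>M" "{a, f} \<in> E"
        by (rule matched_edge_exposed_neighbour[OF max])
      then show False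
        using 3 u v exposed_adjacentI by blast
    qed
  qed
qed

lemma bipartite_if_not_single_exposed: "bipartite V E"
  unfolding bipartite_def
proof (intro exI conjI)
  let ?A = "exposed_adjacent M"
  show "?A \<inter> (V - ?A) = {}"
    by blast
  have "?A \<subseteq> V"
    using graph_Union_subset[OF graph] max maximal_matchingD matching_subset_edges
    unfolding exposed_adjacent_def by blast
  then show "?A \<union> (V - ?A) = V"
    by blast
  show "\<forall>e\<in>E. \<exists>a\<in>?A. \<exists>b\<in>V - ?A. e = {a, b}"
  proof
    fix e assume "e \<in> E"
    then obtain u v where uv: "e = {u, v}" "u \<in> V" "v \<in> V"
      using graph by (blast elim: graph_edgeE)
    then have "{u, v} \<in> E" "{v, u} \<in> E"
      using \<open>e \<in> E\<close> by (simp_all add: insert_commute)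
    then have "u \<in> ?A \<longleftrightarrow> v \<notin> ?A"
      using edge_crosses_exposed_adjacent by blast
    with uv show "\<exists>a\<in>?A. \<exists>b\<in>V - ?A. e = {a, b}"
      by (cases "u \<in> ?A") (auto simp: insert_commute)
  qed
qed

end

subsection \<open>A single exposed vertex\<close>

abbreviation adj_del :: "'a \<Rightarrow> ('a \<times> 'a) set" where
  "adj_del c \<equiv> {(a, b). {a, b} \<in> del_vertex c E}"

lemma adj_delI: "{a, b} \<in> E \<Longrightarrow> a \<noteq> c \<Longrightarrow> b \<noteq> c \<Longrightarrow> (a, b) \<in> adj_del c"
  unfolding del_vertex_def by auto

lemma adj_del_rtrancl_sym:
  assumes "(a, b) \<in> (adj_del c)\<^sup>*"
  shows "(b, a) \<in> (adj_del c)\<^sup>*"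
proof -
  have "sym (adj_del c)"
    unfolding sym_def by (auto simp: insert_commute)
  then show ?thesis
    using assms sym_rtrancl symD by metis
qed

context
  fixes M :: "'a set set" and f c p :: 'a
  assumes max: "maximal_matching E M" and exposed: "V - \<Union>M = {f}" and cp: "{c, p} \<in> M"
begin

lemma reaches_exposed:
  assumes z: "z \<in> V" "z \<noteq> c" "z \<noteq> p"
  shows "(z, f) \<in> (adj_del c)\<^sup>*"
proof (cases "z = f")
  case False
  have M: "matching E M"
    using max by (rule maximal_matchingD)
  have "z \<in> \<Union>M"
    using z(1) False exposed by blast
  then obtain z' where z': "{z, z'} \<in> M"
    using matching_partner[OF graph M] by blast
  have "z' \<noteq> c"
  proof
    assume "z' = c"
    then have "{z, c} = {c, p}"
      using matching_edge_unique[OF M cp z'] by blast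
    with z(3) show False
      by (auto simp: doubleton_eq_iff)
  qed
  obtain a f' where a: "a \<in> {z, z'}" "f' \<in> V - \<Union>M" "{a, f'} \<in> E"
    using matched_edge_exposed_neighbour[OF max z'] .
  then have a: "a \<in> {z, z'}" "{a, f} \<in> E"
    using exposed by simp_all
  have "f \<noteq> c" "a \<noteq> c"
    using exposed cp a(1) z(2) \<open>z' \<noteq> c\<close> by blast+
  have "{z, z'} \<in> E"
    using z' M matching_subset_edges by blast
  then have "(z, a) \<in> (adj_del c)\<^sup>*"
    using a(1) adj_delI[of z z' c] z(2) \<open>z' \<noteq> c\<close> by auto
  moreover have "(a, f) \<in> adj_del c"
    using adj_delI[OF a(2) \<open>a \<noteq> c\<close> \<open>f \<noteq> c\<close>] .
  ultimately show ?thesis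
    by (rule rtrancl_into_rtrancl)
qed simp

text \<open>If \<open>p\<close> reached \<open>f\<close> in \<open>G - c\<close>, every vertex other than \<open>c\<close> would, contradicting that
  \<open>c\<close> is a cut vertex.\<close>

lemma partner_isolated:
  assumes cut: "cut_vertex V E c" and pz: "(p, z) \<in> (adj_del c)\<^sup>*"
  shows "z = p"
proof -
  have p_f: "(p, f) \<notin> (adj_del c)\<^sup>*"
  proof
    assume "(p, f) \<in> (adj_del c)\<^sup>*"
    then have all: "(x, f) \<in> (adj_del c)\<^sup>*" if "x \<in> V" "x \<noteq> c" for x
      using reaches_exposed that by (cases "x = p") auto
    obtain x y where xy: "x \<in> V" "x \<noteq> c" "y \<in> V" "y \<noteq> c" "(x, y) \<notin> (adj_del c)\<^sup>*"
      using cut unfolding cut_vertex_def by blast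
    have "(x, y) \<in> (adj_del c)\<^sup>*"
      using rtrancl_trans[OF all[OF xy(1,2)] adj_del_rtrancl_sym[OF all[OF xy(3,4)]]] .
    with xy(5) show False
      by contradiction
  qed
  show "z = p"
  proof (rule ccontr)
    assume "z \<noteq> p"
    then obtain w where "(w, z) \<in> adj_del c"
      using pz by (metis rtranclE)
    then have "{w, z} \<in> E" "z \<noteq> c"
      unfolding del_vertex_def by auto
    then have "(z, f) \<in> (adj_del c)\<^sup>*"
      using reaches_exposed graph_edge_vertices[OF graph] \<open>z \<noteq> p\<close> by blast
    then show False
      using rtrancl_trans[OF pz] p_f by blast
  qed
qed

lemma cut_vertex_adjacent_exposed:
  assumes cut: "cut_vertex V E c"
  shows "{c, f} \<in> E"
proof -
  obtain a f' where a: "a \<in> {c, p}" "f' \<in> V - \<Union>M" "{a, f'} \<in> E"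
    using matched_edge_exposed_neighbour[OF max cp] .
  then have a: "a \<in> {c, p}" "{a, f} \<in> E"
    using exposed by simp_all
  have "p \<noteq> c" "f \<noteq> c" "f \<noteq> p"
    using graph_edge_distinct[OF graph] cp max maximal_matchingD matching_subset_edges exposed
    by blast+
  have "a \<noteq> p"
  proof
    assume "a = p"
    then have "(p, f) \<in> (adj_del c)\<^sup>*"
      using adj_delI[OF a(2)] \<open>p \<noteq> c\<close> \<open>f \<noteq> c\<close> by blast
    then show False
      using partner_isolated[OF cut] \<open>f \<noteq> p\<close> by blast
  qed
  with a show ?thesis
    by blast
qed

end

lemma bipartite_if_cut_vertex_matched:
  assumes cut: "cut_vertex V E c" and max: "maximal_matching E M" and exposed: "V - \<Union>M = {f}"
    and cp: "{c, p} \<in> M"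
  shows "bipartite V E"
proof -
  have cf: "{f, c} \<in> E"
    using cut_vertex_adjacent_exposed[OF max exposed cp cut] by (simp add: insert_commute)
  note shift = exposure_shift[OF max, of f "{}" c p]
  have max': "maximal_matching E (insert {f, c} (M - {{c, p}}))"
    and exposed': "V - \<Union>(insert {f, c} (M - {{c, p}})) = {p}"
    using shift exposed cp cf by simp_all
  have f_isolated: "z = f" if "(f, z) \<in> (adj_del c)\<^sup>*" for z
    using partner_isolated[OF max' exposed' _ cut] that by (simp add: insert_commute)
  have "c \<in> V" "p \<noteq> c" "f \<noteq> c"
    using cut graph_edge_distinct[OF graph cf] graph_edge_distinct[OF graph] cp max
      maximal_matchingD matching_subset_edges unfolding cut_vertex_def by blast+
  have V: "V \<subseteq> {c, p, f}"
    using reaches_exposed[OF max exposed cp] f_isolated adj_del_rtrancl_sym by blast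
  have "{p, f} \<notin> E"
    using partner_isolated[OF max exposed cp cut, of f] adj_delI[of p f c] \<open>p \<noteq> c\<close> \<open>f \<noteq> c\<close> exposed cp
    by blast
  have "c \<in> e" if e: "e \<in> E" for e
  proof -
    obtain a b where ab: "e = {a, b}" "a \<noteq> b" "a \<in> V" "b \<in> V"
      using graph e by (rule graph_edgeE)
    then have "a \<in> {c, p, f}" "b \<in> {c, p, f}"
      using V by blast+
    with ab(1,2) e \<open>{p, f} \<notin> E\<close> show ?thesis
      by (auto simp: insert_commute)
  qed
  then show ?thesis
    unfolding bipartite_def using \<open>c \<in> V\<close> graph
    by (intro exI[of _ "{c}"] exI[of _ "V - {c}"]) (blast elim: graph_edgeE)
qed

lemma bipartite_if_single_exposed:
  assumes connected: "connected_graph V E" and cut: "cut_vertex V E c"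
    and max: "maximal_matching E M" and exposed: "V - \<Union>M = {f}"
  shows "bipartite V E"
proof (cases "c \<in> \<Union>M")
  case True
  then obtain p where "{c, p} \<in> M"
    using matching_partner[OF graph maximal_matchingD[OF max]] by blast
  then show ?thesis
    using bipartite_if_cut_vertex_matched[OF cut max exposed] by blast
next
  case False
  have "c \<in> V"
    using cut unfolding cut_vertex_def by blast
  with False have "c \<in> V - \<Union>M"
    by blast
  then have "f = c"
    using exposed by simp
  obtain x where "x \<in> V" "x \<noteq> c"
    using cut unfolding cut_vertex_def by blast
  then obtain u where cu: "{c, u} \<in> E"
    using connected_graph_neighbour[OF connected _ \<open>c \<in> V\<close>] by blast
  then have "u \<in> \<Union>M"
    using maximal_matching_no_exposed_edge[OF graph max] False by blast
  then obtain v where "{u, v} \<in> M"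
    using matching_partner[OF graph maximal_matchingD[OF max]] by blast
  note shift = exposure_shift[OF max _ _ this cu]
  have "maximal_matching E (insert {c, u} (M - {{u, v}}))"
    "V - \<Union>(insert {c, u} (M - {{u, v}})) = {v}"
    using shift[of "{}"] exposed \<open>f = c\<close> by simp_all
  then show ?thesis
    using bipartite_if_cut_vertex_matched[OF cut] by blast
qed

end

theorem theorem4p1:
  assumes "graph V E"
    and "connected_graph V E"
    and "edge_stable E"
    and "\<exists>v. cut_vertex V E v"
  shows "bipartite V E"
proof -
  obtain c where cut: "cut_vertex V E c"
    using assms(4) by blast
  interpret edge_stable_graph V E
    using assms(1,3) cut_vertex_no_isolated_edge[OF assms(1,2) cut] by unfold_locales
  have "matching E {}"
    unfolding matching_def by simp
  then obtain M where max: "maximal_matching E M"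
    using matching_extend_maximal[OF finite_edges] by blast
  show ?thesis
  proof (cases "\<exists>f. V - \<Union>M = {f}")
    case True
    then show ?thesis
      using bipartite_if_single_exposed[OF assms(2) cut max] by blast
  next
    case False
    then show ?thesis
      using bipartite_if_not_single_exposed[OF assms(2) max] by blast
  qed
qed

end
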